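(* Let $X$ be an $E\mathcal M$-simplicial set. Then $X$ is a $*$-module if and only if $X$ is mild.
   Context: $\omega=\{1,2,3,\dots\}$ and $\mathcal M$ is the monoid of injective maps $\omega\to\omega$ under composition. For $A\subset\omega$, $\mathcal M_A\subset\mathcal M$ is the submonoid of injections fixing $A$ elementwise; $A$ is co-infinite if $\omega\setminus A$ is infinite. $E\mathcal M$ is the simplicial monoid with $(E\mathcal M)_n=\mathcal M^{1+n}=\mathrm{maps}(\{0,\dots,n\},\mathcal M)$, pointwise multiplication, simplicial structure maps by precomposition. An $E\mathcal M$-simplicial set is a simplicial set with a left $E\mathcal M$-action. For a set $S$, $E\mathrm{Inj}(S,\omega)$ is the simplicial set whose $m$-simplices are tuples $(f_0,\dots,f_m)$ of injections $S\to\omega$ (structure maps by precomposition in the index), with left $E\mathcal M$-action by postcomposition. For $x\in X_n$, $A\subset\omega$, $0\le k\le n$, $x$ is $k$-supported on $A$ if $i_k(u).x=x$ for all $u\in\mathcal M_A$, where $i_k\colon\mathcal M\to\mathcal M^{1+n}$ includes into the $(1+k)$-th factor. $X$ is mild if for every $n$, every $x\in X_n$ and every $0\le k\le n$ there is a co-infinite $A\subset\omega$ such that $x$ is $k$-supported on $A$. Operadic product: for $E\mathcal M$-simplicial sets $X_1,\dots,X_n$, let $E\mathrm{Inj}(n\times\omega,\omega)\times_{E\mathcal M^n}X_1\times\dots\times X_n$ be the quotient of $E\mathrm{Inj}(n\times\omega,\omega)\times X_1\times\dots\times X_n$ by the equivalence relation generated on $m$-simplices by $(f_0,\dots,f_m;u_1.x_1,\dots,u_n.x_n)\sim(f_0\circ(u_1^{(0)}\amalg\dots\amalg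 u_n^{(0)}),\dots,f_m\circ(u_1^{(m)}\amalg\dots\amalg u_n^{(m)});x_1,\dots,x_n)$ for all $u_i=(u_i^{(0)},\dots,u_i^{(m)})\in(E\mathcal M)_m$; it carries the $E\mathcal M$-action by postcomposition on the first factor. There is a natural map $\Phi$ to $X_1\times\dots\times X_n$ given on $m$-simplices by $\Phi[f_0,\dots,f_m;x_1,\dots,x_n]=((f_0\iota_1,\dots,f_m\iota_1).x_1,\dots,(f_0\iota_n,\dots,f_m\iota_n).x_n)$, where $\iota_j(t)=(j,t)$. An $E\mathcal M$-simplicial set $X$ is a $*$-module if $\Phi\colon E\mathrm{Inj}(2\times\omega,\omega)\times_{E\mathcal M^2}(X\times * )\to X\times *\cong X$ is an isomorphism ($*$ the terminal $E\mathcal M$-simplicial set). *)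

theory Defs
  imports Main
begin

text \<open>Convention: omega = {1,2,3,...} is modelled by the type nat (a relabelling
  t |-> t-1); a map in M is an injective function nat => nat.
  The standard simplex [n] = {0..n}; a simplicial operator [m] -> [n] is a
  monotone function alpha with alpha i <= n for i <= m (values beyond m irrelevant).\<close>

definition simp_map :: "nat \<Rightarrow> nat \<Rightarrow> (nat \<Rightarrow> nat) \<Rightarrow> bool" where
  "simp_map m n \<alpha> \<longleftrightarrow> (\<forall>i\<le>m. \<alpha> i \<le> n) \<and> (\<forall>i j. i \<le> j \<and> j \<le> m \<longrightarrow> \<alpha> i \<le> \<alpha> j)"

definition simplicial_set :: "(nat \<Rightarrow> 'a set) \<Rightarrow> (nat \<Rightarrow> nat \<Rightarrow> (nat \<Rightarrow> nat) \<Rightarrow> 'a \<Rightarrow> 'a) \<Rightarrow> bool" where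
  "simplicial_set X F \<longleftrightarrow>
     (\<forall>m n \<alpha> x. simp_map m n \<alpha> \<and> x \<in> X n \<longrightarrow> F m n \<alpha> x \<in> X m) \<and>
     (\<forall>n x. x \<in> X n \<longrightarrow> F n n id x = x) \<and>
     (\<forall>k m n \<alpha> \<beta> x. simp_map m n \<alpha> \<and> simp_map k m \<beta> \<and> x \<in> X n \<longrightarrow>
         F k m \<beta> (F m n \<alpha> x) = F k n (\<alpha> \<circ> \<beta>) x) \<and>
     (\<forall>m n \<alpha> \<alpha>' x. simp_map m n \<alpha> \<and> (\<forall>i\<le>m. \<alpha> i = \<alpha>' i) \<and> x \<in> X n \<longrightarrow>
         F m n \<alpha> x = F m n \<alpha>' x)"

text \<open>(E M)_n = M^{1+n}: tuples (u 0, ..., u n) of injections (entries beyond n irrelevant).\<close>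

definition EM :: "nat \<Rightarrow> (nat \<Rightarrow> nat \<Rightarrow> nat) set" where
  "EM n = {u. \<forall>i\<le>n. inj (u i)}"

definition EM_sset :: "(nat \<Rightarrow> 'a set) \<Rightarrow> (nat \<Rightarrow> nat \<Rightarrow> (nat \<Rightarrow> nat) \<Rightarrow> 'a \<Rightarrow> 'a)
    \<Rightarrow> (nat \<Rightarrow> (nat \<Rightarrow> nat \<Rightarrow> nat) \<Rightarrow> 'a \<Rightarrow> 'a) \<Rightarrow> bool" where
  "EM_sset X F act \<longleftrightarrow> simplicial_set X F \<and>
     (\<forall>n u x. u \<in> EM n \<and> x \<in> X n \<longrightarrow> act n u x \<in> X n) \<and>
     (\<forall>n x. x \<in> X n \<longrightarrow> act n (\<lambda>i. id) x = x) \<and>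
     (\<forall>n u v x. u \<in> EM n \<and> v \<in> EM n \<and> x \<in> X n \<longrightarrow>
         act n u (act n v x) = act n (\<lambda>i. u i \<circ> v i) x) \<and>
     (\<forall>n u u' x. u \<in> EM n \<and> (\<forall>i\<le>n. u i = u' i) \<and> x \<in> X n \<longrightarrow> act n u x = act n u' x) \<and>
     (\<forall>m n \<alpha> u x. simp_map m n \<alpha> \<and> u \<in> EM n \<and> x \<in> X n \<longrightarrow>
         F m n \<alpha> (act n u x) = act m (u \<circ> \<alpha>) (F m n \<alpha> x))"

definition k_supported :: "(nat \<Rightarrow> (nat \<Rightarrow> nat \<Rightarrow> nat) \<Rightarrow> 'a \<Rightarrow> 'a) \<Rightarrow> nat \<Rightarrow> nat \<Rightarrow> nat set \<Rightarrow> 'a \<Rightarrow> bool" where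
  "k_supported act n k A x \<longleftrightarrow>
     (\<forall>u. inj u \<and> (\<forall>a\<in>A. u a = a) \<longrightarrow> act n (\<lambda>i. if i = k then u else id) x = x)"

definition mild :: "(nat \<Rightarrow> 'a set) \<Rightarrow> (nat \<Rightarrow> (nat \<Rightarrow> nat \<Rightarrow> nat) \<Rightarrow> 'a \<Rightarrow> 'a) \<Rightarrow> bool" where
  "mild X act \<longleftrightarrow>
     (\<forall>n. \<forall>x\<in>X n. \<forall>k\<le>n. \<exists>A. infinite (UNIV - A) \<and> k_supported act n k A x)"

text \<open>The operadic product E Inj(2 x omega, omega) x_{EM^2} (X x * ), levelwise.
  2 x omega is modelled as {1,2} x nat; * has a single simplex in each degree with
  trivial action, so the * coordinate is omitted.\<close>

definition two_omega :: "(nat \<times> nat) set" where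
  "two_omega = {1, 2} \<times> UNIV"

definition iota :: "nat \<Rightarrow> nat \<Rightarrow> nat \<times> nat" where
  "iota j t = (j, t)"

definition cop :: "(nat \<Rightarrow> nat) \<Rightarrow> (nat \<Rightarrow> nat) \<Rightarrow> nat \<times> nat \<Rightarrow> nat \<times> nat" where
  "cop u1 u2 = (\<lambda>(j, t). if j = 1 then (j, u1 t) else (j, u2 t))"

definition EInj2 :: "nat \<Rightarrow> (nat \<Rightarrow> nat \<times> nat \<Rightarrow> nat) set" where
  "EInj2 m = {f. \<forall>i\<le>m. inj_on (f i) two_omega}"

definition prodX :: "(nat \<Rightarrow> 'a set) \<Rightarrow> nat \<Rightarrow> ((nat \<Rightarrow> nat \<times> nat \<Rightarrow> nat) \<times> 'a) set" where
  "prodX X m = EInj2 m \<times> X m"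

text \<open>Generating relation on m-simplices:
  (f; u1.x, u2.* ) ~ (f o (u1 \<amalg> u2); x, * ), where u2.* = *.\<close>

definition opgen :: "(nat \<Rightarrow> 'a set) \<Rightarrow> (nat \<Rightarrow> (nat \<Rightarrow> nat \<Rightarrow> nat) \<Rightarrow> 'a \<Rightarrow> 'a) \<Rightarrow> nat
    \<Rightarrow> (nat \<Rightarrow> nat \<times> nat \<Rightarrow> nat) \<times> 'a \<Rightarrow> (nat \<Rightarrow> nat \<times> nat \<Rightarrow> nat) \<times> 'a \<Rightarrow> bool" where
  "opgen X act m a b \<longleftrightarrow> a \<in> prodX X m \<and> b \<in> prodX X m \<and>
     (\<exists>u1\<in>EM m. \<exists>u2\<in>EM m. snd a = act m u1 (snd b) \<and>
        (\<forall>i\<le>m. \<forall>p\<in>two_omega. fst b i p = fst a i (cop (u1 i) (u2 i) p)))"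

definition opequiv :: "(nat \<Rightarrow> 'a set) \<Rightarrow> (nat \<Rightarrow> (nat \<Rightarrow> nat \<Rightarrow> nat) \<Rightarrow> 'a \<Rightarrow> 'a) \<Rightarrow> nat
    \<Rightarrow> ((nat \<Rightarrow> nat \<times> nat \<Rightarrow> nat) \<times> 'a) rel" where
  "opequiv X act m = {(a, b). equivclp (opgen X act m) a b}"

definition PhiX :: "(nat \<Rightarrow> (nat \<Rightarrow> nat \<Rightarrow> nat) \<Rightarrow> 'a \<Rightarrow> 'a) \<Rightarrow> nat
    \<Rightarrow> (nat \<Rightarrow> nat \<times> nat \<Rightarrow> nat) \<times> 'a \<Rightarrow> 'a" where
  "PhiX act m a = act m (\<lambda>i. fst a i \<circ> iota 1) (snd a)"

text \<open>X is a *-module iff Phi is an isomorphism, i.e. a bijection on m-simplices for all m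
  (Phi induced on equivalence classes).\<close>

definition star_module :: "(nat \<Rightarrow> 'a set) \<Rightarrow> (nat \<Rightarrow> (nat \<Rightarrow> nat \<Rightarrow> nat) \<Rightarrow> 'a \<Rightarrow> 'a) \<Rightarrow> bool" where
  "star_module X act \<longleftrightarrow>
     (\<forall>m. bij_betw (\<lambda>c. the_elem (PhiX act m ` c)) (prodX X m // opequiv X act m) (X m))"

end

(* Every simplex of the operadic product has a representative [a + b; x] with a and b
   injections of disjoint ranges, and Phi maps it to a.x.  Phi is always injective: the second
   component b can be exchanged freely, and if a.x = a'.x' = y one finds, by a Hilbert hotel
   argument, injections P and P' that fix the ranges of a resp. a', leave infinitely many values
   free and commute; then [a + _; x] ~ [P + _; y] ~ [P P' + _; y] = [P' P + _; y] ~ [P' + _; y]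
   ~ [a' + _; x'].  So X is a *-module iff Phi is surjective.  If y = a.x, then y is k-supported
   on the co-infinite range of a_k; conversely, if y is k-supported on a co-infinite A_k for every
   k, an injection h_k fixing A_k and missing infinitely many values gives y = h.y = Phi[h + g; y]. *)

theory Submission
  imports Defs "HOL-Library.Infinite_Set"
begin

definition inj_disjoint :: "(nat \<Rightarrow> nat) \<Rightarrow> (nat \<Rightarrow> nat) \<Rightarrow> bool" where
  "inj_disjoint a b \<longleftrightarrow> inj a \<and> inj b \<and> range a \<inter> range b = {}"

lemma inj_disjoint_comp:
  "inj_disjoint a b \<Longrightarrow> inj u \<Longrightarrow> inj v \<Longrightarrow> inj_disjoint (a \<circ> u) (b \<circ> v)"
  unfolding inj_disjoint_def by (auto intro: inj_compose)

lemma inj_disjoint_infinite_compl: "inj_disjoint a b \<Longrightarrow> infinite (- range a)"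
  unfolding inj_disjoint_def
  by (metis Compl_iff disjoint_iff finite_subset range_inj_infinite subsetI)

text \<open>Hilbert's hotel: listing C as c_0 < c_1 < ..., the shift sends c_n to c_2n and fixes
  everything outside C, leaving the rooms c_(2n+1) free.\<close>

definition hotel_shift :: "nat set \<Rightarrow> nat \<Rightarrow> nat" where
  "hotel_shift C t = (if t \<in> C then enumerate C (2 * inv (enumerate C) t) else t)"

definition hotel_room :: "nat set \<Rightarrow> nat \<Rightarrow> nat" where
  "hotel_room C n = enumerate C (2 * n + 1)"

lemma hotel_shift_outside [simp]: "t \<notin> C \<Longrightarrow> hotel_shift C t = t"
  by (simp add: hotel_shift_def)

context
  fixes C :: "nat set"
  assumes C: "infinite C"
begin

private lemma enumerate_facts: "inj (enumerate C)" "range (enumerate C) = C"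
  using bij_enumerate[OF C] by (simp_all add: bij_betw_def)

private lemma enumerate_inv: "t \<in> C \<Longrightarrow> enumerate C (inv (enumerate C) t) = t"
  using enumerate_facts(2) by (metis f_inv_into_f)

lemma hotel_shift_in: "t \<in> C \<Longrightarrow> hotel_shift C t \<in> C"
  using enumerate_facts(2) by (auto simp: hotel_shift_def)

lemma hotel_room_in: "hotel_room C n \<in> C"
  using enumerate_facts(2) by (auto simp: hotel_room_def)

lemma hotel_inj_disjoint: "inj_disjoint (hotel_shift C) (hotel_room C)"
proof -
  have "inj (hotel_shift C)"
  proof (rule inj_on_inverseI)
    fix t
    show "(\<lambda>s. if s \<in> C then enumerate C (inv (enumerate C) s div 2) else s) (hotel_shift C t) = t"
      using enumerate_facts enumerate_inv by (auto simp: hotel_shift_def)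
  qed
  moreover have "inj (hotel_room C)"
    unfolding hotel_room_def by (auto intro!: injI dest: injD[OF enumerate_facts(1)])
  moreover have "hotel_shift C s \<noteq> hotel_room C n" for s n
  proof
    assume eq: "hotel_shift C s = hotel_room C n"
    show False
    proof (cases "s \<in> C")
      case True
      then have "2 * inv (enumerate C) s = 2 * n + 1"
        using eq enumerate_facts(1) by (simp add: hotel_shift_def hotel_room_def inj_eq)
      then show False by presburger
    next
      case False
      then show False
        using eq hotel_room_in by simp
    qed
  qed
  ultimately show ?thesis
    by (auto simp: inj_disjoint_def)
qed

end

lemma infinite_disjoint_subsets:
  fixes U V :: "nat set"
  assumes "infinite U" "infinite V"
  obtains T T' where "T \<subseteq> U" "T' \<subseteq> V" "infinite T" "infinite T'" "T \<inter> T' = {}"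
proof (cases "finite (U \<inter> V)")
  case True
  have "U - V = U - U \<inter> V" "V - U = V - U \<inter> V" by auto
  then have "infinite (U - V)" "infinite (V - U)"
    using True assms by (simp_all add: Diff_infinite_finite)
  then show ?thesis using that[of "U - V" "V - U"] by blast
next
  case False
  let ?W = "U \<inter> V"
  have "hotel_shift ?W ` ?W \<subseteq> ?W" "range (hotel_room ?W) \<subseteq> ?W"
    using False hotel_shift_in hotel_room_in by blast+
  moreover have "infinite (hotel_shift ?W ` ?W)" "infinite (range (hotel_room ?W))"
    and "hotel_shift ?W ` ?W \<inter> range (hotel_room ?W) = {}"
    using hotel_inj_disjoint[OF False]
    by (auto simp: inj_disjoint_def finite_image_iff inj_on_subset range_inj_infinite False)
  ultimately show ?thesis
    using that[of "hotel_shift ?W ` ?W" "range (hotel_room ?W)"] by blast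
qed

lemma hotel_shift_commute:
  assumes "infinite T" "infinite T'" "T \<inter> T' = {}"
  shows "hotel_shift T \<circ> hotel_shift T' = hotel_shift T' \<circ> hotel_shift T"
proof
  fix t
  consider "t \<in> T" | "t \<in> T'" | "t \<notin> T" "t \<notin> T'" by blast
  then show "(hotel_shift T \<circ> hotel_shift T') t = (hotel_shift T' \<circ> hotel_shift T) t"
  proof cases
    case 1
    then have "hotel_shift T t \<notin> T'" "t \<notin> T'"
      using assms hotel_shift_in by blast+
    then show ?thesis by simp
  next
    case 2
    then have "hotel_shift T' t \<notin> T" "t \<notin> T"
      using assms hotel_shift_in by blast+
    then show ?thesis by simp
  qed simp
qed

lemma commuting_hotel_shifts:
  fixes a a' :: "nat \<Rightarrow> nat \<Rightarrow> nat"
  assumes "\<And>i. i \<le> m \<Longrightarrow> infinite (- range (a i))" "\<And>i. i \<le> m \<Longrightarrow> infinite (- range (a' i))"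
  obtains P Q P' Q' where
    "\<And>i. i \<le> m \<Longrightarrow> inj_disjoint (P i) (Q i)" "\<And>i. i \<le> m \<Longrightarrow> inj_disjoint (P' i) (Q' i)"
    "\<And>i. i \<le> m \<Longrightarrow> P i \<circ> a i = a i" "\<And>i. i \<le> m \<Longrightarrow> P' i \<circ> a' i = a' i"
    "\<And>i. i \<le> m \<Longrightarrow> range (Q i) \<inter> range (a i) = {}"
    "\<And>i. i \<le> m \<Longrightarrow> range (Q' i) \<inter> range (a' i) = {}"
    "\<And>i. i \<le> m \<Longrightarrow> P i \<circ> P' i = P' i \<circ> P i"
proof -
  have "\<forall>i\<le>m. \<exists>T T'. T \<subseteq> - range (a i) \<and> T' \<subseteq> - range (a' i) \<and>
      infinite T \<and> infinite T' \<and> T \<inter> T' = {}"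
    using infinite_disjoint_subsets assms by metis
  then obtain T T' where T: "\<And>i. i \<le> m \<Longrightarrow> T i \<subseteq> - range (a i) \<and> T' i \<subseteq> - range (a' i) \<and>
      infinite (T i) \<and> infinite (T' i) \<and> T i \<inter> T' i = {}"
    by metis
  show thesis
  proof (rule that[of "\<lambda>i. hotel_shift (T i)" "\<lambda>i. hotel_room (T i)"
        "\<lambda>i. hotel_shift (T' i)" "\<lambda>i. hotel_room (T' i)"])
    fix i
    assume "i \<le> m"
    note T = T[OF this]
    then show "inj_disjoint (hotel_shift (T i)) (hotel_room (T i))"
      "inj_disjoint (hotel_shift (T' i)) (hotel_room (T' i))"
      "hotel_shift (T i) \<circ> hotel_shift (T' i) = hotel_shift (T' i) \<circ> hotel_shift (T i)"
      by (simp_all add: hotel_inj_disjoint hotel_shift_commute)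
    have "a i t \<notin> T i" "a' i t \<notin> T' i" for t
      using T by auto
    then show "hotel_shift (T i) \<circ> a i = a i" "hotel_shift (T' i) \<circ> a' i = a' i"
      by (simp_all add: fun_eq_iff)
    have "range (hotel_room (T i)) \<subseteq> T i" "range (hotel_room (T' i)) \<subseteq> T' i"
      using T by (auto simp: hotel_room_in)
    with T show "range (hotel_room (T i)) \<inter> range (a i) = {}"
      "range (hotel_room (T' i)) \<inter> range (a' i) = {}"
      by blast+
  qed
qed

lemma inj_disjoint_common_factor:
  assumes "inj_disjoint a b" "inj_disjoint a c"
  obtains d v w where "inj_disjoint a d" "inj v" "inj w" "d \<circ> v = b" "d \<circ> w = c"
proof
  let ?D = "range b \<union> range c"
  define d where "d = enumerate ?D"
  have "infinite ?D"
    using assms by (auto simp: inj_disjoint_def range_inj_infinite)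
  then have "bij_betw d UNIV ?D"
    unfolding d_def by (rule bij_enumerate)
  then have d: "inj d" "range d = ?D"
    by (simp_all add: bij_betw_def)
  then show "inj_disjoint a d"
    using assms by (auto simp: inj_disjoint_def)
  have "inj_on (inv d) ?D"
    using d(2) by (intro inj_on_inv_into) simp
  then show "inj (inv d \<circ> b)" "inj (inv d \<circ> c)"
    using assms by (auto simp: inj_disjoint_def intro!: comp_inj_on elim: inj_on_subset)
  show "d \<circ> (inv d \<circ> b) = b" "d \<circ> (inv d \<circ> c) = c"
    using d(2) by (auto simp: fun_eq_iff f_inv_into_f)
qed

lemma bij_betw_quotient_iff_image:
  assumes r: "equiv UNIV r"
    and compat: "\<And>a b. (a, b) \<in> r \<Longrightarrow> f a = f b"
    and separating: "\<And>a b. a \<in> S \<Longrightarrow> b \<in> S \<Longrightarrow> f a = f b \<Longrightarrow> (a, b) \<in> r"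
  shows "bij_betw (\<lambda>c. the_elem (f ` c)) (S // r) Y \<longleftrightarrow> f ` S = Y"
proof -
  have elem_class: "the_elem (f ` r `` {a}) = f a" for a
  proof -
    have "a \<in> r `` {a}"
      using equiv_class_self[OF r] by simp
    moreover have "f b = f a" if "b \<in> r `` {a}" for b
      using that compat[of a b] by auto
    ultimately have "f ` r `` {a} = {f a}"
      by blast
    then show ?thesis by simp
  qed
  have "S // r = (\<lambda>a. r `` {a}) ` S"
    unfolding quotient_def by blast
  then have "(\<lambda>c. the_elem (f ` c)) ` (S // r) = f ` S"
    by (simp add: image_image elem_class)
  moreover have "inj_on (\<lambda>c. the_elem (f ` c)) (S // r)"
  proof (rule inj_onI)
    fix c c'
    assume "c \<in> S // r" "c' \<in> S // r" and eq: "the_elem (f ` c) = the_elem (f ` c')"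
    then obtain a a' where a: "a \<in> S" "a' \<in> S" and c: "c = r `` {a}" "c' = r `` {a'}"
      by (auto elim!: quotientE)
    with eq have "(a, a') \<in> r"
      using separating elem_class by simp
    then show "c = c'"
      using c equiv_class_eq[OF r] by simp
  qed
  ultimately show ?thesis
    by (simp add: bij_betw_def)
qed

definition copair :: "(nat \<Rightarrow> nat \<Rightarrow> nat) \<Rightarrow> (nat \<Rightarrow> nat \<Rightarrow> nat) \<Rightarrow> nat \<Rightarrow> nat \<times> nat \<Rightarrow> nat" where
  "copair a b i p = (if fst p = 1 then a i (snd p) else b i (snd p))"

lemma copair_iota_1: "copair a b i \<circ> iota 1 = a i"
  by (auto simp: copair_def iota_def)

lemma copair_in_EInj2:
  assumes "\<And>i. i \<le> m \<Longrightarrow> inj_disjoint (a i) (b i)"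
  shows "copair a b \<in> EInj2 m"
  unfolding EInj2_def
proof (intro CollectI allI impI inj_onI)
  fix i p q
  assume "i \<le> m" "p \<in> two_omega" "q \<in> two_omega" "copair a b i p = copair a b i q"
  moreover from assms[OF \<open>i \<le> m\<close>] have "inj (a i)" "inj (b i)" "a i s \<noteq> b i t" "b i t \<noteq> a i s" for s t
    by (auto simp: inj_disjoint_def)
  ultimately show "p = q"
    by (cases p, cases q) (auto simp: two_omega_def copair_def inj_eq)
qed

lemma EInj2_restrictions_inj_disjoint:
  assumes "f \<in> EInj2 m" "i \<le> m"
  shows "inj_disjoint (f i \<circ> iota 1) (f i \<circ> iota 2)"
proof -
  have f: "p = q" if "f i p = f i q" "p \<in> two_omega" "q \<in> two_omega" for p q
    using assms that by (auto simp: EInj2_def dest: inj_onD)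
  have mem: "(j, t) \<in> two_omega" if "j \<in> {1, 2}" for j t
    using that by (simp add: two_omega_def)
  have "f i (1, s) \<noteq> f i (2, t)" for s t
  proof
    assume "f i (1, s) = f i (2, t)"
    then have "(1::nat, s) = (2, t)"
      using f mem by blast
    then show False by simp
  qed
  moreover have "inj (\<lambda>t. f i (j, t))" if "j \<in> {1, 2}" for j
  proof (rule injI)
    fix s t
    assume "f i (j, s) = f i (j, t)"
    then have "(j, s) = (j, t)"
      using f mem[OF that] by blast
    then show "s = t" by simp
  qed
  ultimately show ?thesis
    unfolding inj_disjoint_def iota_def comp_def by auto
qed

lemma EM_id: "(\<lambda>i. id) \<in> EM n"
  by (simp add: EM_def)

lemma EM_comp: "u \<in> EM n \<Longrightarrow> v \<in> EM n \<Longrightarrow> (\<lambda>i. u i \<circ> v i) \<in> EM n"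
  by (simp add: EM_def inj_compose)

text \<open>Only the action of E M enters.\<close>

locale EM_action =
  fixes X :: "nat \<Rightarrow> 'a set"
    and act :: "nat \<Rightarrow> (nat \<Rightarrow> nat \<Rightarrow> nat) \<Rightarrow> 'a \<Rightarrow> 'a"
  assumes act_closed: "u \<in> EM n \<Longrightarrow> x \<in> X n \<Longrightarrow> act n u x \<in> X n"
    and act_id: "x \<in> X n \<Longrightarrow> act n (\<lambda>i. id) x = x"
    and act_comp: "u \<in> EM n \<Longrightarrow> v \<in> EM n \<Longrightarrow> x \<in> X n \<Longrightarrow>
      act n u (act n v x) = act n (\<lambda>i. u i \<circ> v i) x"
    and act_cong: "u \<in> EM n \<Longrightarrow> (\<And>i. i \<le> n \<Longrightarrow> u i = u' i) \<Longrightarrow> x \<in> X n \<Longrightarrow>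
      act n u x = act n u' x"

lemma EM_sset_imp_EM_action: "EM_sset X F act \<Longrightarrow> EM_action X act"
  unfolding EM_sset_def EM_action_def by blast

context EM_action
begin

abbreviation opequivp :: "nat \<Rightarrow> (nat \<Rightarrow> nat \<times> nat \<Rightarrow> nat) \<times> 'a \<Rightarrow> (nat \<Rightarrow> nat \<times> nat \<Rightarrow> nat) \<times> 'a \<Rightarrow> bool" where
  "opequivp m \<equiv> equivclp (opgen X act m)"

lemma act_absorb:
  assumes "u \<in> EM n" "a \<in> EM n" "x \<in> X n" "\<And>i. i \<le> n \<Longrightarrow> u i \<circ> a i = a i"
  shows "act n u (act n a x) = act n a x"
  using act_comp[OF assms(1-3)] act_cong[OF EM_comp[OF assms(1,2)] assms(4) assms(3)] by simp

lemma opgen_copair: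
  assumes ab: "\<And>i. i \<le> m \<Longrightarrow> inj_disjoint (a i) (b i)"
    and uv: "u \<in> EM m" "v \<in> EM m" and x: "x \<in> X m"
    and a': "\<And>i. i \<le> m \<Longrightarrow> a' i = a i \<circ> u i" and b': "\<And>i. i \<le> m \<Longrightarrow> b' i = b i \<circ> v i"
  shows "opgen X act m (copair a b, act m u x) (copair a' b', x)"
proof -
  have "inj_disjoint (a' i) (b' i)" if "i \<le> m" for i
    using that ab a' b' uv inj_disjoint_comp by (simp add: EM_def)
  then have "copair a' b' \<in> EInj2 m"
    by (rule copair_in_EInj2)
  moreover have "\<forall>i\<le>m. \<forall>p\<in>two_omega. copair a' b' i p = copair a b i (cop (u i) (v i) p)"
    using a' b' by (auto simp: copair_def cop_def)
  ultimately show ?thesis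
    using uv x ab unfolding opgen_def prodX_def
    by (auto simp: copair_in_EInj2 act_closed)
qed

lemma copair_equiv_absorb:
  assumes "\<And>i. i \<le> m \<Longrightarrow> inj_disjoint (c i) (d i)" "u \<in> EM m" "x \<in> X m"
    and "\<And>i. i \<le> m \<Longrightarrow> c i \<circ> u i = a i"
  shows "opequivp m (copair c d, act m u x) (copair a d, x)"
  using opgen_copair[OF assms(1-2) EM_id assms(3)] assms(4) by auto

text \<open>The second component is irrelevant: b and c both factor through an enumeration
  of range b \<union> range c.\<close>

lemma copair_equiv_change_second:
  assumes ab: "\<And>i. i \<le> m \<Longrightarrow> inj_disjoint (a i) (b i)"
    and ac: "\<And>i. i \<le> m \<Longrightarrow> inj_disjoint (a i) (c i)" and x: "x \<in> X m"
  shows "opequivp m (copair a b, x) (copair a c, x)"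
proof -
  have "\<exists>d v w. inj_disjoint (a i) d \<and> inj v \<and> inj w \<and> d \<circ> v = b i \<and> d \<circ> w = c i"
    if "i \<le> m" for i
    using inj_disjoint_common_factor[OF ab[OF that] ac[OF that]] by metis
  then obtain d v w where d: "\<And>i. i \<le> m \<Longrightarrow>
      inj_disjoint (a i) (d i) \<and> inj (v i) \<and> inj (w i) \<and> d i \<circ> v i = b i \<and> d i \<circ> w i = c i"
    by metis
  then have ad: "\<And>i. i \<le> m \<Longrightarrow> inj_disjoint (a i) (d i)" and "v \<in> EM m" "w \<in> EM m"
    by (simp_all add: EM_def)
  have "opgen X act m (copair a d, act m (\<lambda>i. id) x) (copair a b, x)"
    by (rule opgen_copair[OF ad EM_id \<open>v \<in> EM m\<close> x]) (use d in auto)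
  moreover have "opgen X act m (copair a d, act m (\<lambda>i. id) x) (copair a c, x)"
    by (rule opgen_copair[OF ad EM_id \<open>w \<in> EM m\<close> x]) (use d in auto)
  ultimately show ?thesis
    using x act_id by (metis converse_r_into_equivclp equivclp_trans r_into_equivclp)
qed

lemma copair_equiv_if_same_image:
  assumes ab: "\<And>i. i \<le> m \<Longrightarrow> inj_disjoint (a i) (b i)"
    and a'b': "\<And>i. i \<le> m \<Longrightarrow> inj_disjoint (a' i) (b' i)"
    and x: "x \<in> X m" and x': "x' \<in> X m" and same_image: "act m a x = act m a' x'"
  shows "opequivp m (copair a b, x) (copair a' b', x')"
proof -
  have compl: "\<And>i. i \<le> m \<Longrightarrow> infinite (- range (a i))"
    by (rule inj_disjoint_infinite_compl[OF ab])
  have compl': "\<And>i. i \<le> m \<Longrightarrow> infinite (- range (a' i))"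
    by (rule inj_disjoint_infinite_compl[OF a'b'])
  obtain P Q P' Q' where PQ: "\<And>i. i \<le> m \<Longrightarrow> inj_disjoint (P i) (Q i)"
    and P'Q': "\<And>i. i \<le> m \<Longrightarrow> inj_disjoint (P' i) (Q' i)"
    and Pa: "\<And>i. i \<le> m \<Longrightarrow> P i \<circ> a i = a i"
    and P'a': "\<And>i. i \<le> m \<Longrightarrow> P' i \<circ> a' i = a' i"
    and Q: "\<And>i. i \<le> m \<Longrightarrow> range (Q i) \<inter> range (a i) = {}"
    and Q': "\<And>i. i \<le> m \<Longrightarrow> range (Q' i) \<inter> range (a' i) = {}"
    and commute: "\<And>i. i \<le> m \<Longrightarrow> P i \<circ> P' i = P' i \<circ> P i"
    using commuting_hotel_shifts[where m = m and a = a and a' = a', OF compl compl'] by blast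
  define R where "R i = P i \<circ> P' i" for i
  define y where "y = act m a x"
  have EM: "a \<in> EM m" "a' \<in> EM m" "P \<in> EM m" "P' \<in> EM m"
    using ab a'b' PQ P'Q' by (simp_all add: EM_def inj_disjoint_def)
  have Py: "act m P y = y"
    unfolding y_def by (rule act_absorb[OF EM(3,1) x Pa])
  have P'y: "act m P' y = y"
    unfolding y_def same_image by (rule act_absorb[OF EM(4,2) x' P'a'])
  have y: "y \<in> X m"
    unfolding y_def using act_closed[OF EM(1) x] .
  have RP: "P' i \<circ> P i = R i" if "i \<le> m" for i
    using commute[OF that] by (simp add: R_def)
  have aQ: "inj_disjoint (a i) (Q i)" and a'Q': "inj_disjoint (a' i) (Q' i)"
    and RQ: "inj_disjoint (R i) (Q i)" and RQ': "inj_disjoint (R i) (Q' i)" if "i \<le> m" for i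
    using ab[OF that] a'b'[OF that] PQ[OF that] P'Q'[OF that] Q[OF that] Q'[OF that] RP[OF that]
      inj_disjoint_comp[OF PQ[OF that], of "P' i" id] inj_disjoint_comp[OF P'Q'[OF that], of "P i" id]
    by (auto simp: inj_disjoint_def R_def)
  have "opequivp m (copair a b, x) (copair a Q, x)"
    using ab aQ x by (rule copair_equiv_change_second)
  also have "opequivp m \<dots> (copair P Q, y)"
    unfolding y_def using copair_equiv_absorb[OF PQ EM(1) x Pa] by (rule equivclp_sym)
  also have "opequivp m \<dots> (copair R Q, y)"
    using copair_equiv_absorb[OF PQ EM(4) y, where a = R] P'y by (simp add: R_def)
  also have "opequivp m \<dots> (copair R Q', y)"
    using RQ RQ' y by (rule copair_equiv_change_second)
  also have "opequivp m \<dots> (copair P' Q', y)"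
    using copair_equiv_absorb[OF P'Q' EM(3) y RP] Py by (metis equivclp_sym)
  also have "opequivp m \<dots> (copair a' Q', x')"
    using copair_equiv_absorb[OF P'Q' EM(2) x' P'a'] unfolding y_def same_image .
  also have "opequivp m \<dots> (copair a' b', x')"
    using a'Q' a'b' x' by (rule copair_equiv_change_second)
  finally show ?thesis .
qed

lemma PhiX_opgen:
  assumes "opgen X act m A B"
  shows "PhiX act m A = PhiX act m B"
proof -
  obtain f z f' x where AB: "A = (f, z)" "B = (f', x)"
    by fastforce
  with assms obtain u v where u: "u \<in> EM m" and "v \<in> EM m" and z: "z = act m u x"
    and f': "\<forall>i\<le>m. \<forall>p\<in>two_omega. f' i p = f i (cop (u i) (v i) p)"
    unfolding opgen_def by auto
  from assms AB have "f \<in> EInj2 m" "x \<in> X m"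
    by (simp_all add: opgen_def prodX_def)
  then have f1: "(\<lambda>i. f i \<circ> iota 1) \<in> EM m"
    using EInj2_restrictions_inj_disjoint by (simp add: EM_def inj_disjoint_def)
  have "f i \<circ> iota 1 \<circ> u i = f' i \<circ> iota 1" if "i \<le> m" for i
    using f' that by (auto simp: iota_def cop_def two_omega_def)
  then have "act m (\<lambda>i. f i \<circ> iota 1 \<circ> u i) x = act m (\<lambda>i. f' i \<circ> iota 1) x"
    using act_cong[OF EM_comp[OF f1 u] _ \<open>x \<in> X m\<close>] by simp
  then show ?thesis
    unfolding AB PhiX_def z using act_comp[OF f1 u \<open>x \<in> X m\<close>] by simp
qed

lemma PhiX_opequivp: "opequivp m A B \<Longrightarrow> PhiX act m A = PhiX act m B"
  by (induction rule: equivclp_induct) (auto dest: PhiX_opgen)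

lemma PhiX_in: "A \<in> prodX X m \<Longrightarrow> PhiX act m A \<in> X m"
  using EInj2_restrictions_inj_disjoint
  by (auto simp: prodX_def PhiX_def EM_def inj_disjoint_def intro!: act_closed)

lemma opgen_copair_restrictions:
  assumes "(f, x) \<in> prodX X m"
  shows "opgen X act m (f, x) (copair (\<lambda>i. f i \<circ> iota 1) (\<lambda>i. f i \<circ> iota 2), x)"
proof -
  have "copair (\<lambda>i. f i \<circ> iota 1) (\<lambda>i. f i \<circ> iota 2) \<in> EInj2 m"
    using assms EInj2_restrictions_inj_disjoint by (auto simp: prodX_def intro!: copair_in_EInj2)
  moreover have "\<exists>u\<in>EM m. \<exists>v\<in>EM m. x = act m u x \<and> (\<forall>i\<le>m. \<forall>p\<in>two_omega.
      copair (\<lambda>i. f i \<circ> iota 1) (\<lambda>i. f i \<circ> iota 2) i p = f i (cop (u i) (v i) p))"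
  proof (intro bexI[OF _ EM_id] conjI)
    show "x = act m (\<lambda>i. id) x"
      using assms act_id by (simp add: prodX_def)
  qed (auto simp: copair_def iota_def two_omega_def cop_def)
  ultimately show ?thesis
    using assms unfolding opgen_def prodX_def by simp
qed

lemma opequivp_if_PhiX_eq:
  assumes A: "A \<in> prodX X m" and B: "B \<in> prodX X m" and eq: "PhiX act m A = PhiX act m B"
  shows "opequivp m A B"
proof -
  obtain f x f' x' where AB: "A = (f, x)" "B = (f', x')"
    by fastforce
  with A B have "f \<in> EInj2 m" "f' \<in> EInj2 m" "x \<in> X m" "x' \<in> X m"
    by (simp_all add: prodX_def)
  then have "opequivp m (copair (\<lambda>i. f i \<circ> iota 1) (\<lambda>i. f i \<circ> iota 2), x)
      (copair (\<lambda>i. f' i \<circ> iota 1) (\<lambda>i. f' i \<circ> iota 2), x')"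
    using eq by (intro copair_equiv_if_same_image EInj2_restrictions_inj_disjoint)
      (simp_all add: AB PhiX_def)
  then show ?thesis
    using opgen_copair_restrictions A B unfolding AB
    by (meson converse_r_into_equivclp equivclp_trans r_into_equivclp)
qed

lemma star_module_iff_PhiX_surj: "star_module X act \<longleftrightarrow> (\<forall>m. X m \<subseteq> PhiX act m ` prodX X m)"
proof -
  have "equiv UNIV (opequiv X act m)" for m
    unfolding opequiv_def equivp_equiv by simp
  then have "bij_betw (\<lambda>c. the_elem (PhiX act m ` c)) (prodX X m // opequiv X act m) (X m)
      \<longleftrightarrow> PhiX act m ` prodX X m = X m" for m
    by (rule bij_betw_quotient_iff_image) (auto simp: opequiv_def intro: PhiX_opequivp opequivp_if_PhiX_eq)
  then show ?thesis
    unfolding star_module_def using PhiX_in by blast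
qed

lemma act_fixed_if_fixed_levelwise:
  assumes x: "x \<in> X m" and h: "\<And>k. k \<le> m \<Longrightarrow> inj (h k)"
    and fixed: "\<And>k. k \<le> m \<Longrightarrow> act m (\<lambda>i. if i = k then h k else id) x = x"
  shows "act m h x = x"
proof -
  have "act m (\<lambda>i. if i < j then h i else id) x = x" if "j \<le> Suc m" for j
    using that
  proof (induction j)
    case 0
    show ?case
      using act_id[OF x] by (simp add: id_def)
  next
    case (Suc j)
    have "(\<lambda>i. if i < j then h i else id) \<in> EM m" "(\<lambda>i. if i = j then h j else id) \<in> EM m"
      using h Suc.prems by (simp_all add: EM_def)
    moreover have "(\<lambda>i. if i < Suc j then h i else id)
        = (\<lambda>i. (if i < j then h i else id) \<circ> (if i = j then h j else id))"
      by (auto simp: fun_eq_iff)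
    ultimately have "act m (\<lambda>i. if i < Suc j then h i else id) x
        = act m (\<lambda>i. if i < j then h i else id) (act m (\<lambda>i. if i = j then h j else id) x)"
      using act_comp[OF _ _ x] by simp
    also have "\<dots> = x"
      using fixed[of j] Suc by simp
    finally show ?case .
  qed
  moreover have "act m (\<lambda>i. if i < Suc m then h i else id) x = act m h x"
    using h by (intro act_cong[OF _ _ x]) (simp_all add: EM_def)
  ultimately show ?thesis
    by simp
qed

lemma k_supported_range:
  assumes "a \<in> EM n" "x \<in> X n"
  shows "k_supported act n k (range (a k)) (act n a x)"
  unfolding k_supported_def
proof (intro allI impI)
  fix u
  assume u: "inj u \<and> (\<forall>t\<in>range (a k). u t = t)"
  then have "(\<lambda>i. if i = k then u else id) \<in> EM n"
    by (simp add: EM_def)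
  then show "act n (\<lambda>i. if i = k then u else id) (act n a x) = act n a x"
    using u by (intro act_absorb assms) auto
qed

lemma mild_if_PhiX_surj:
  assumes "\<And>m. X m \<subseteq> PhiX act m ` prodX X m"
  shows "mild X act"
  unfolding mild_def
proof (intro allI ballI impI)
  fix n y k
  assume "y \<in> X n" "k \<le> n"
  then obtain f x where fx: "(f, x) \<in> prodX X n" and y: "y = act n (\<lambda>i. f i \<circ> iota 1) x"
    using assms by (force simp: PhiX_def)
  then have f: "\<And>i. i \<le> n \<Longrightarrow> inj_disjoint (f i \<circ> iota 1) (f i \<circ> iota 2)"
    by (intro EInj2_restrictions_inj_disjoint) (simp_all add: prodX_def)
  then have "(\<lambda>i. f i \<circ> iota 1) \<in> EM n"
    by (simp add: EM_def inj_disjoint_def)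
  moreover have "infinite (- range (f k \<circ> iota 1))"
    using f[OF \<open>k \<le> n\<close>] by (rule inj_disjoint_infinite_compl)
  moreover have "x \<in> X n"
    using fx by (simp add: prodX_def)
  ultimately show "\<exists>A. infinite (UNIV - A) \<and> k_supported act n k A y"
    unfolding y Compl_eq_Diff_UNIV using k_supported_range by blast
qed

lemma PhiX_surj_if_mild:
  assumes "mild X act" "y \<in> X m"
  shows "y \<in> PhiX act m ` prodX X m"
proof -
  have "\<forall>k\<le>m. \<exists>A. infinite (- A) \<and> k_supported act m k A y"
    using assms by (simp add: mild_def Compl_eq_Diff_UNIV)
  then obtain A where A: "\<And>k. k \<le> m \<Longrightarrow> infinite (- A k) \<and> k_supported act m k (A k) y"
    by metis
  define h where "h k = hotel_shift (- A k)" for k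
  define g where "g k = hotel_room (- A k)" for k
  have hg: "inj_disjoint (h k) (g k)" if "k \<le> m" for k
    using A[OF that] hotel_inj_disjoint by (simp add: h_def g_def)
  have "act m h y = y"
  proof (rule act_fixed_if_fixed_levelwise[OF assms(2)])
    fix k
    assume "k \<le> m"
    then show "inj (h k)"
      using hg by (simp add: inj_disjoint_def)
    moreover have "\<forall>t\<in>A k. h k t = t"
      by (simp add: h_def)
    ultimately show "act m (\<lambda>i. if i = k then h k else id) y = y"
      using A[OF \<open>k \<le> m\<close>] by (simp add: k_supported_def)
  qed
  then have "PhiX act m (copair h g, y) = y"
    unfolding PhiX_def fst_conv snd_conv copair_iota_1 .
  moreover have "(copair h g, y) \<in> prodX X m"
    using hg assms(2) by (simp add: prodX_def copair_in_EInj2)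
  ultimately show ?thesis
    by force
qed

end

theorem theorem2p24:
  fixes X :: "nat \<Rightarrow> 'a set"
    and F :: "nat \<Rightarrow> nat \<Rightarrow> (nat \<Rightarrow> nat) \<Rightarrow> 'a \<Rightarrow> 'a"
    and act :: "nat \<Rightarrow> (nat \<Rightarrow> nat \<Rightarrow> nat) \<Rightarrow> 'a \<Rightarrow> 'a"
  assumes "EM_sset X F act"
  shows "star_module X act \<longleftrightarrow> mild X act"
proof -
  interpret EM_action X act
    using assms by (rule EM_sset_imp_EM_action)
  show ?thesis
    using star_module_iff_PhiX_surj mild_if_PhiX_surj PhiX_surj_if_mild by blast
qed

end
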